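(* Let $\Sigma_1,\Sigma_2$ be systems as in the context satisfying: $(p_0)$ $\Psi_1=\Psi_2$; $(p_1)$ $C_1A_1^tB_1=C_2A_2^tB_2$ for all $t\ge0$; $(p_2)$ $C_1A_1^tG_1\mu_1=C_2A_2^tG_2\mu_2$ for all $t\ge0$; $(p_3)$ $C_1A_1^kG_1G_1^T(A_1^h)^TC_1^T=C_2A_2^kG_2G_2^T(A_2^h)^TC_2^T$ for all $h,k\ge0$. Then, with $\tilde n=n_1+n_2$ and $Q_{i,\tilde n}=\mathcal{O}bs_{\tilde n}(A_i,C_i)$, the subspace $\ker([Q_{1,\tilde n}\ \ -Q_{2,\tilde n}])$ is the largest subspace relation in $\mathbb R^{n_1+n_2}$ with respect to which $\Sigma_1$ and $\Sigma_2$ have equivalent stochastic external behavior.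
   Context: For $i=1,2$, $\Sigma_i$ is the system $x_i(t+1)=A_ix_i(t)+B_iu(t)+G_iw_i(t)$, $y_i(t)=C_ix_i(t)+\nu_i(t)$, $t\in\mathbb{N}$, with $x_i\in\mathbb{R}^{n_i}$, $u\in\mathbb{R}^m$, $w_i\in\mathbb{R}^{l_i}$, $y_i,\nu_i\in\mathbb{R}^p$, where $(w_i(t))_t$ is i.i.d. with $w_i(t)\sim\mathcal N(\mu_i,I_{l_i})$, $(\nu_i(t))_t$ is i.i.d. with $\nu_i(t)\sim\mathcal N(0,\Psi_i)$, and the two sequences are mutually independent. For a deterministic initial state $x_i^0$ and deterministic input $\mathbf u:\mathbb N\to\mathbb R^m$, $\mathbf x_i|_{x_i^0,\mathbf u}(t)=A_i^tx_i^0+\sum_{\tau=0}^{t-1}A_i^{t-1-\tau}(B_iu(\tau)+G_iw_i(\tau))$, $\mathbf y_i|_{x_i^0,\mathbf u}(t)=C_i\mathbf x_i|_{x_i^0,\mathbf u}(t)+\nu_i(t)$. Processes are stochastically equivalent ($\sim$) if all finite-dimensional joint distributions coincide. For a subspace $\mathcal R\subseteq\mathbb R^{n_1}\times\mathbb R^{n_2}$, $\Sigma_1,\Sigma_2$ have equivalent stochastic external behavior with respect to $\mathcal R$ if $\mathbf y_1|_{x_1^0,\mathbf u}\sim\mathbf y_2|_{x_2^0,\mathbf u}$ for all $(x_1^0,x_2^0)\in\mathcal R$ and all inputs $\mathbf u$. $\mathcal{O}bs_k(A,C)$ is the matrix obtained by stacking $C,CA,\dots,CA^{k-1}$ vertically.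 *)

theory Defs
  imports "HOL-Analysis.Analysis" "HOL-Probability.Probability"
begin

fun matpow :: "real^'n^'n \<Rightarrow> nat \<Rightarrow> real^'n^'n" where
  "matpow A 0 = mat 1"
| "matpow A (Suc k) = matpow A k ** A"

text \<open>Observability map: the action of the stacked matrix Obs_k(A,C) = [C; CA; ...; CA^(k-1)]
  on a vector x, represented as the finite sequence of its k blocks (zero beyond index k).\<close>
definition Obs :: "nat \<Rightarrow> real^'n^'n \<Rightarrow> real^'n^'p \<Rightarrow> real^'n \<Rightarrow> (nat \<Rightarrow> real^'p)" where
  "Obs k A C x = (\<lambda>j. if j < k then (C ** matpow A j) *v x else 0)"

definition gauss_real :: "real \<Rightarrow> real \<Rightarrow> real measure" where
  "gauss_real m v = (if v = 0 then return borel m else density lborel (normal_density m (sqrt v)))"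

definition gaussian_vec :: "'a measure \<Rightarrow> ('a \<Rightarrow> real^'l) \<Rightarrow> real^'l \<Rightarrow> real^'l^'l \<Rightarrow> bool" where
  "gaussian_vec M X m S \<longleftrightarrow> X \<in> borel_measurable M \<and>
     (\<forall>a. distr M borel (\<lambda>\<omega>. a \<bullet> X \<omega>) = gauss_real (a \<bullet> m) (a \<bullet> (S *v a)))"

text \<open>Noise model on a probability space M: (w(t))_t i.i.d. N(mu, I), (nu(t))_t i.i.d. N(0, Psi),
  the two sequences mutually independent (i.e. the whole family {w(t), nu(s)} is independent).\<close>
definition noise_model :: "'a measure \<Rightarrow> real^'l \<Rightarrow> real^'p^'p \<Rightarrow> (nat \<Rightarrow> 'a \<Rightarrow> real^'l)
    \<Rightarrow> (nat \<Rightarrow> 'a \<Rightarrow> real^'p) \<Rightarrow> bool" where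
  "noise_model M mu Psi w nu \<longleftrightarrow> prob_space M \<and>
     (\<forall>t. w t \<in> borel_measurable M \<and> nu t \<in> borel_measurable M) \<and>
     prob_space.indep_vars M (\<lambda>_. borel) (\<lambda>t \<omega>. (w t \<omega>, nu t \<omega>)) UNIV \<and>
     (\<forall>t. distr M borel (\<lambda>\<omega>. (w t \<omega>, nu t \<omega>)) =
        distr M borel (w t) \<Otimes>\<^sub>M distr M borel (nu t)) \<and>
     (\<forall>t. gaussian_vec M (w t) mu (mat 1)) \<and>
     (\<forall>t. gaussian_vec M (nu t) 0 Psi)"

definition state_proc :: "real^'n^'n \<Rightarrow> real^'m^'n \<Rightarrow> real^'l^'n \<Rightarrow> (nat \<Rightarrow> 'a \<Rightarrow> real^'l)
    \<Rightarrow> real^'n \<Rightarrow> (nat \<Rightarrow> real^'m) \<Rightarrow> nat \<Rightarrow> 'a \<Rightarrow> real^'n" where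
  "state_proc A B G w x0 u t \<omega> = matpow A t *v x0 +
     (\<Sum>\<tau><t. matpow A (t - 1 - \<tau>) *v (B *v u \<tau> + G *v w \<tau> \<omega>))"

definition output_proc :: "real^'n^'n \<Rightarrow> real^'m^'n \<Rightarrow> real^'l^'n \<Rightarrow> real^'n^'p
    \<Rightarrow> (nat \<Rightarrow> 'a \<Rightarrow> real^'l) \<Rightarrow> (nat \<Rightarrow> 'a \<Rightarrow> real^'p)
    \<Rightarrow> real^'n \<Rightarrow> (nat \<Rightarrow> real^'m) \<Rightarrow> nat \<Rightarrow> 'a \<Rightarrow> real^'p" where
  "output_proc A B G C w nu x0 u t \<omega> = C *v state_proc A B G w x0 u t \<omega> + nu t \<omega>"

definition stoch_equiv :: "'a measure \<Rightarrow> (nat \<Rightarrow> 'a \<Rightarrow> real^'p) \<Rightarrow> 'b measure \<Rightarrow> (nat \<Rightarrow> 'b \<Rightarrow> real^'p) \<Rightarrow> bool" where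
  "stoch_equiv M1 Y1 M2 Y2 \<longleftrightarrow> (\<forall>T. finite T \<longrightarrow>
     distr M1 (PiM T (\<lambda>_. borel)) (\<lambda>\<omega>. restrict (\<lambda>t. Y1 t \<omega>) T) =
     distr M2 (PiM T (\<lambda>_. borel)) (\<lambda>\<omega>. restrict (\<lambda>t. Y2 t \<omega>) T))"

end

theory Submission
  imports Defs
begin

text \<open>The output processes are Gaussian, so they are determined by their finite-dimensional
  characteristic functions. Writing \<open>\<Sum>t\<in>T. a t \<bullet> y t\<close> as a deterministic part plus a sum of
  independent Gaussian terms, one per time step, conditions (p0)--(p3) make the noise means and all
  variances of the two systems coincide, so their characteristic functions differ exactly by the
  factor \<open>iexp (\<Sum>t\<in>T. a t \<bullet> (C1 A1^t x1 - C2 A2^t x2))\<close>. Hence the behaviours from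
  \<open>(x1, x2)\<close> are equivalent iff \<open>C1 A1^t x1 = C2 A2^t x2\<close> for all \<open>t\<close>, and since the
  unobservable subspaces of the joint system form a chain that stops decreasing once two consecutive
  members agree, the first \<open>n1 + n2\<close> outputs already decide this. Uniqueness of multivariate
  characteristic functions follows from Levy's one-dimensional theorem by induction on the number
  of coordinates.\<close>

section \<open>Finite measures on \<open>\<real>\<^sup>I\<close> are determined by their characteristic functions\<close>

lemma real_distribution_density_inverse_mass:
  assumes "finite_measure L" "sets L = sets borel" "measure L UNIV = c" "c > 0"
  shows "real_distribution (density L (\<lambda>_. 1 / c))"
proof -
  interpret L: finite_measure L by fact
  have "space L = UNIV" using sets_eq_imp_space_eq[OF assms(2)] by simp
  then have "emeasure (density L (\<lambda>_. 1 / c)) (space L) = 1"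
    using assms(2-4)
    by (simp add: emeasure_density nn_integral_cmult_indicator L.emeasure_eq_measure
        ennreal_mult[symmetric])
  then show ?thesis
    using assms(2) by (auto intro!: prob_spaceI simp: real_distribution_def real_distribution_axioms_def)
qed

lemma finite_measure_eq_if_char_eq:
  fixes M N :: "real measure"
  assumes M: "finite_measure M" and N: "finite_measure N"
    and sets_M: "sets M = sets borel" and sets_N: "sets N = sets borel"
    and char_eq: "\<And>t. (CLINT x|M. iexp (t * x)) = (CLINT x|N. iexp (t * x))"
  shows "M = N"
proof -
  interpret M: finite_measure M by fact
  interpret N: finite_measure N by fact
  have space_M: "space M = UNIV" and space_N: "space N = UNIV"
    using sets_eq_imp_space_eq[OF sets_M] sets_eq_imp_space_eq[OF sets_N] by simp_all
  define c where "c = measure M UNIV"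
  have c_N: "measure N UNIV = c"
    using char_eq[of 0] space_M space_N by (simp add: c_def scaleR_conv_of_real)
  show ?thesis
  proof (cases "c = 0")
    case True
    then have "emeasure M A = 0" "emeasure N A = 0" for A
      using emeasure_space[of M A] emeasure_space[of N A] space_M space_N c_N
      by (simp_all add: M.emeasure_eq_measure N.emeasure_eq_measure c_def)
    then show ?thesis by (intro measure_eqI) (simp_all add: sets_M sets_N)
  next
    case False
    then have c_pos: "c > 0" by (simp add: c_def order_less_le)
    have "char (density M (\<lambda>_. 1 / c)) t = char (density N (\<lambda>_. 1 / c)) t" for t
      unfolding char_def using c_pos char_eq[of t] sets_M sets_N by (simp add: integral_density)
    then have normalized_eq: "density M (\<lambda>_. 1 / c) = density N (\<lambda>_. 1 / c)"
      using Levy_uniqueness c_pos real_distribution_density_inverse_mass[OF M sets_M c_def[symmetric]]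
        real_distribution_density_inverse_mass[OF N sets_N c_N] by blast
    have rescale: "emeasure L A = ennreal c * emeasure (density L (\<lambda>_. 1 / c)) A"
      if "sets L = sets borel" "A \<in> sets borel" for L :: "real measure" and A
      using that c_pos
      by (simp add: emeasure_density nn_integral_cmult_indicator mult.assoc[symmetric]
          ennreal_mult[symmetric])
    show ?thesis
    proof (rule measure_eqI)
      fix A assume "A \<in> sets M"
      then show "emeasure M A = emeasure N A"
        using rescale[OF sets_M, of A] rescale[OF sets_N, of A] normalized_eq sets_M by simp
    qed (simp add: sets_M sets_N)
  qed
qed

lemma finite_measure_density_bounded:
  fixes g :: "'a \<Rightarrow> real"
  assumes L: "finite_measure L" and g: "g \<in> borel_measurable L" and g_bound: "\<And>x. g x \<le> c"
  shows "finite_measure (density L g)"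
proof -
  interpret L: finite_measure L by fact
  have "emeasure (density L g) (space L) = (\<integral>\<^sup>+ x. g x \<partial>L)"
    using g by (simp add: emeasure_density)
  also have "\<dots> \<le> (\<integral>\<^sup>+ x. ennreal c \<partial>L)"
    using g_bound by (intro nn_integral_mono ennreal_leI)
  also have "\<dots> < \<infinity>"
    by (simp add: ennreal_mult_less_top L.emeasure_eq_measure)
  finally show ?thesis by (intro finite_measureI) simp
qed

lemma integral_indicator_eq_if_weighted_char_eq:
  fixes M N :: "'a measure" and f g :: "'a \<Rightarrow> real"
  assumes M: "finite_measure M" and N: "finite_measure N" and sets_N: "sets N = sets M"
    and [measurable]: "f \<in> borel_measurable M" "g \<in> borel_measurable M"
    and g_nonneg: "\<And>x. 0 \<le> g x" and g_bound: "\<And>x. g x \<le> c"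
    and char_eq: "\<And>t. (CLINT x|M. g x *\<^sub>R iexp (t * f x)) = (CLINT x|N. g x *\<^sub>R iexp (t * f x))"
    and B: "B \<in> sets borel"
  shows "(LINT x|M. g x * indicator B (f x)) = (LINT x|N. g x * indicator B (f x))"
proof -
  note [measurable_cong] = sets_N
  have finite_density: "finite_measure (density L g)" if "finite_measure L" "sets L = sets M" for L
    by (rule finite_measure_density_bounded[OF that(1) _ g_bound])
      (simp add: measurable_cong_sets[OF that(2) refl])
  define image where "image L = distr (density L g) borel f" for L
  have "image M = image N"
    unfolding image_def
  proof (rule finite_measure_eq_if_char_eq)
    show "finite_measure (distr (density M g) borel f)" "finite_measure (distr (density N g) borel f)"
      using finite_density[OF M] finite_density[OF N sets_N]
      by (auto intro: finite_measure.finite_measure_distr)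
    show "(CLINT y|distr (density M g) borel f. iexp (t * y)) =
        (CLINT y|distr (density N g) borel f. iexp (t * y))" for t
      using char_eq[of t] g_nonneg by (simp add: integral_distr integral_density)
  qed simp_all
  moreover have "(LINT y|image L. indicator B y) = (LINT x|L. g x * indicator B (f x))"
    if "sets L = sets M" for L
  proof -
    note [measurable_cong] = that
    show ?thesis
      unfolding image_def using B g_nonneg
      by (subst integral_distr, measurable, subst integral_density) (measurable, simp_all)
  qed
  ultimately show ?thesis
    using sets_N by metis
qed

lemma integral_indicator_eq_if_bounded_weighted_char_eq:
  fixes M N :: "'a measure" and f r :: "'a \<Rightarrow> real"
  assumes M: "finite_measure M" and N: "finite_measure N" and sets_N: "sets N = sets M"
    and [measurable]: "f \<in> borel_measurable M" "r \<in> borel_measurable M"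
    and r_bound: "\<And>x. \<bar>r x\<bar> \<le> c"
    and char_eq: "\<And>t. (CLINT x|M. iexp (t * f x)) = (CLINT x|N. iexp (t * f x))"
    and weighted_char_eq:
      "\<And>t. (CLINT x|M. r x *\<^sub>R iexp (t * f x)) = (CLINT x|N. r x *\<^sub>R iexp (t * f x))"
    and B: "B \<in> sets borel"
  shows "(LINT x|M. r x * indicator B (f x)) = (LINT x|N. r x * indicator B (f x))"
proof -
  note [measurable_cong] = sets_N
  have c_nonneg: "0 \<le> c" using r_bound[of undefined] by simp
  have integrable: "integrable L (\<lambda>x. r x *\<^sub>R iexp (t * f x))" "integrable L (\<lambda>x. iexp (t * f x))"
    "integrable L (\<lambda>x. r x * indicator B (f x))" "integrable L (\<lambda>x. indicator B (f x) :: real)"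
    if "finite_measure L" "sets L = sets M" for L t
    using that B r_bound
    by (auto intro!: finite_measure.integrable_const_bound[where B = "max c 1"]
        simp: measurable_cong_sets[OF that(2) refl] abs_mult indicator_def le_max_iff_disj)
  have shifted: "(LINT x|M. (c + r x) * indicator B (f x)) = (LINT x|N. (c + r x) * indicator B (f x))"
  proof (rule integral_indicator_eq_if_weighted_char_eq[OF M N sets_N _ _ _ _ _ B])
    show "0 \<le> c + r x" "c + r x \<le> 2 * c" for x
      using r_bound[of x] by auto
    show "(CLINT x|M. (c + r x) *\<^sub>R iexp (t * f x)) = (CLINT x|N. (c + r x) *\<^sub>R iexp (t * f x))" for t
      using char_eq[of t] weighted_char_eq[of t] integrable[OF M] integrable[OF N sets_N]
      by (simp add: scaleR_add_left)
  qed measurable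
  have unweighted: "(LINT x|M. c * indicator B (f x)) = (LINT x|N. c * indicator B (f x))"
  proof (rule integral_indicator_eq_if_weighted_char_eq[OF M N sets_N _ _ _ _ _ B])
    show "(CLINT x|M. c *\<^sub>R iexp (t * f x)) = (CLINT x|N. c *\<^sub>R iexp (t * f x))" for t
      using char_eq[of t] by simp
  qed (use c_nonneg in auto)
  show ?thesis
    using shifted unweighted integrable[OF M] integrable[OF N sets_N]
    by (auto simp: distrib_right)
qed

lemma iexp_eq_cis: "iexp x = cis x"
  by (simp add: cis_conv_exp)

definition char_PiM :: "('i \<Rightarrow> real) measure \<Rightarrow> 'i set \<Rightarrow> ('i \<Rightarrow> real) \<Rightarrow> complex" where
  "char_PiM M I a = (CLINT x|M. iexp (\<Sum>i\<in>I. a i * x i))"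

definition slice_marginal :: "('i \<Rightarrow> real) measure \<Rightarrow> 'i \<Rightarrow> real set \<Rightarrow> 'i set \<Rightarrow> ('i \<Rightarrow> real) measure"
  where "slice_marginal M i B J =
    distr (density M (\<lambda>x. indicator B (x i))) (PiM J (\<lambda>_. borel)) (\<lambda>x. restrict x J)"

lemma sets_slice_marginal [simp, measurable_cong]:
  "sets (slice_marginal M i B J) = sets (PiM J (\<lambda>_. borel))"
  by (simp add: slice_marginal_def)

context
  fixes M :: "('i \<Rightarrow> real) measure" and i :: 'i and J :: "'i set" and B :: "real set"
  assumes M: "finite_measure M" and sets_M: "sets M = sets (PiM (insert i J) (\<lambda>_. borel))"
    and B: "B \<in> sets borel"
begin

lemma restrict_measurable_slice: "(\<lambda>x. restrict x J) \<in> measurable M (PiM J (\<lambda>_. borel))"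
  unfolding measurable_cong_sets[OF sets_M refl] by (rule measurable_restrict_subset) auto

lemma finite_measure_slice_marginal: "finite_measure (slice_marginal M i B J)"
proof -
  note [measurable_cong] = sets_M
  have "finite_measure (density M (\<lambda>x. indicator B (x i)))"
    unfolding ennreal_indicator[symmetric]
    by (rule finite_measure_density_bounded[OF M, where c = 1]) (use B in auto)
  then show ?thesis
    unfolding slice_marginal_def
    by (rule finite_measure.finite_measure_distr) (use restrict_measurable_slice in simp)
qed

lemma char_PiM_slice_marginal:
  "char_PiM (slice_marginal M i B J) J a =
    complex_of_real (LINT x|M. cos (\<Sum>j\<in>J. a j * x j) * indicator B (x i)) +
    \<i> * complex_of_real (LINT x|M. sin (\<Sum>j\<in>J. a j * x j) * indicator B (x i))"
proof -
  note [measurable_cong] = sets_M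
  have [measurable]: "(\<lambda>x. \<Sum>j\<in>J. a j * x j) \<in> borel_measurable M"
    by (auto intro!: borel_measurable_sum measurable_component_singleton)
  have "char_PiM (slice_marginal M i B J) J a =
      (CLINT x|density M (\<lambda>x. indicator B (x i)). iexp (\<Sum>j\<in>J. a j * x j))"
    unfolding char_PiM_def slice_marginal_def using restrict_measurable_slice
    by (subst integral_distr) (auto intro!: Bochner_Integration.integral_cong sum.cong)
  also have "\<dots> = (CLINT x|M. indicator B (x i) *\<^sub>R iexp (\<Sum>j\<in>J. a j * x j))"
    unfolding ennreal_indicator[symmetric] using B by (intro integral_density) auto
  also have "integrable M (\<lambda>x. indicator B (x i) *\<^sub>R iexp (\<Sum>j\<in>J. a j * x j))"
    using M B by (intro finite_measure.integrable_const_bound[where B = 1]) (auto simp: indicator_def)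
  then have "(CLINT x|M. indicator B (x i) *\<^sub>R iexp (\<Sum>j\<in>J. a j * x j)) =
      complex_of_real (LINT x|M. cos (\<Sum>j\<in>J. a j * x j) * indicator B (x i)) +
      \<i> * complex_of_real (LINT x|M. sin (\<Sum>j\<in>J. a j * x j) * indicator B (x i))"
    unfolding iexp_eq_cis by (simp add: complex_eq_iff mult.commute flip: integral_Re integral_Im)
  finally show ?thesis .
qed

lemma emeasure_slice_marginal_PiE:
  assumes "i \<notin> J" "finite J" and F: "\<And>j. j \<in> J \<Longrightarrow> F j \<in> sets borel"
  shows "emeasure (slice_marginal M i B J) (Pi\<^sub>E J F) = emeasure M (Pi\<^sub>E (insert i J) (F(i := B)))"
proof -
  note [measurable_cong] = sets_M
  have space_M: "space M = (\<Pi>\<^sub>E j\<in>insert i J. UNIV)"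
    using sets_eq_imp_space_eq[OF sets_M] by (simp add: space_PiM)
  have box: "Pi\<^sub>E J F \<in> sets (PiM J (\<lambda>_. borel))"
    using F assms(2) by (auto intro!: sets_PiM_I_finite)
  have "emeasure (slice_marginal M i B J) (Pi\<^sub>E J F) =
      (\<integral>\<^sup>+ x. indicator B (x i) * indicator ((\<lambda>x. restrict x J) -` Pi\<^sub>E J F \<inter> space M) x \<partial>M)"
    unfolding slice_marginal_def using box restrict_measurable_slice B
    by (simp add: emeasure_distr emeasure_density measurable_sets)
  also have "\<dots> = (\<integral>\<^sup>+ x. indicator (Pi\<^sub>E (insert i J) (F(i := B))) x \<partial>M)"
    using assms(1) space_M
    by (intro nn_integral_cong) (auto simp: indicator_def PiE_iff)
  also have "\<dots> = emeasure M (Pi\<^sub>E (insert i J) (F(i := B)))"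
    using F B assms(2) by (intro nn_integral_indicator) (auto simp: sets_M intro!: sets_PiM_I_finite)
  finally show ?thesis .
qed

end

lemma sum_insert_fun_upd:
  assumes "i \<notin> J" "finite J"
  shows "(\<Sum>j\<in>insert i J. (a(i := t)) j * x j) = (\<Sum>j\<in>J. a j * x j) + t * x i"
proof -
  have "(\<Sum>j\<in>J. (a(i := t)) j * x j) = (\<Sum>j\<in>J. a j * x j)"
    using assms by (intro sum.cong) auto
  then show ?thesis using assms by (simp add: add.commute)
qed

lemma cos_scaleR_iexp: "cos u *\<^sub>R iexp s = (iexp (u + s) + iexp (- u + s)) / 2"
  and sin_scaleR_iexp: "sin u *\<^sub>R iexp s = - \<i> * (iexp (u + s) - iexp (- u + s)) / 2"
  unfolding iexp_eq_cis by (simp_all add: complex_eq_iff cos_add sin_add cos_diff sin_diff field_simps)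

lemma slab_integrals_eq_if_char_PiM_eq:
  fixes M N :: "('i \<Rightarrow> real) measure"
  assumes i: "i \<notin> J" and J: "finite J"
    and M: "finite_measure M" and N: "finite_measure N"
    and sets_M: "sets M = sets (PiM (insert i J) (\<lambda>_. borel))"
    and sets_N: "sets N = sets (PiM (insert i J) (\<lambda>_. borel))"
    and char_eq: "\<And>a. char_PiM M (insert i J) a = char_PiM N (insert i J) a"
    and B: "B \<in> sets borel"
  shows "(LINT x|M. cos (\<Sum>j\<in>J. a j * x j) * indicator B (x i)) =
      (LINT x|N. cos (\<Sum>j\<in>J. a j * x j) * indicator B (x i))"
    and "(LINT x|M. sin (\<Sum>j\<in>J. a j * x j) * indicator B (x i)) =
      (LINT x|N. sin (\<Sum>j\<in>J. a j * x j) * indicator B (x i))"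
proof -
  define \<theta> where "\<theta> a x = (\<Sum>j\<in>J. a j * x j)" for a and x :: "'i \<Rightarrow> real"
  note [measurable_cong] = sets_M
  have sets_N': "sets N = sets M" using sets_M sets_N by simp
  have \<theta>_uminus: "- \<theta> a x = \<theta> (\<lambda>j. - a j) x" for a x
    by (simp add: \<theta>_def sum_negf)
  have [measurable]: "\<theta> a \<in> borel_measurable M" "(\<lambda>x. x i) \<in> borel_measurable M" for a
    unfolding \<theta>_def by (auto intro!: borel_measurable_sum measurable_component_singleton)
  have integrable: "integrable L (\<lambda>x. iexp (\<theta> a x + t * x i))"
    if "finite_measure L" "sets L = sets M" for L a t
    using that by (intro finite_measure.integrable_const_bound[where B = 1])
      (auto simp: measurable_cong_sets[OF that(2) refl])
  have char_shift: "(CLINT x|M. iexp (\<theta> a x + t * x i)) = (CLINT x|N. iexp (\<theta> a x + t * x i))" for a t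
    using char_eq[of "a(i := t)"] unfolding char_PiM_def sum_insert_fun_upd[OF i J] \<theta>_def .
  have "(CLINT x|M. cos (\<theta> a x) *\<^sub>R iexp (t * x i)) = (CLINT x|N. cos (\<theta> a x) *\<^sub>R iexp (t * x i))"
    and "(CLINT x|M. sin (\<theta> a x) *\<^sub>R iexp (t * x i)) = (CLINT x|N. sin (\<theta> a x) *\<^sub>R iexp (t * x i))"
    for t
    unfolding cos_scaleR_iexp sin_scaleR_iexp \<theta>_uminus
    using char_shift[of a t] char_shift[of "\<lambda>j. - a j" t] integrable[OF M] integrable[OF N sets_N']
    by simp_all
  moreover have "(CLINT x|M. iexp (t * x i)) = (CLINT x|N. iexp (t * x i))" for t
    using char_shift[of "\<lambda>_. 0" t] by (simp add: \<theta>_def)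
  ultimately show "(LINT x|M. cos (\<theta> a x) * indicator B (x i)) = (LINT x|N. cos (\<theta> a x) * indicator B (x i))"
    and "(LINT x|M. sin (\<theta> a x) * indicator B (x i)) = (LINT x|N. sin (\<theta> a x) * indicator B (x i))"
    by (auto intro!: integral_indicator_eq_if_bounded_weighted_char_eq[OF M N sets_N' _ _ _ _ _ B,
        where c = 1])
qed

text \<open>Induction step: the slab integrals determine the characteristic functions of the slice
  marginals, which by the induction hypothesis determine the measure of every box.\<close>
lemma PiM_eq_if_char_PiM_eq_insert:
  fixes M N :: "('i \<Rightarrow> real) measure"
  assumes i: "i \<notin> J" and J: "finite J"
    and IH: "\<And>M' N'. finite_measure M' \<Longrightarrow> finite_measure N' \<Longrightarrow>
        sets M' = sets (PiM J (\<lambda>_. borel)) \<Longrightarrow> sets N' = sets (PiM J (\<lambda>_. borel)) \<Longrightarrow>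
        (\<And>a. char_PiM M' J a = char_PiM N' J a) \<Longrightarrow> M' = N'"
    and M: "finite_measure M" and N: "finite_measure N"
    and sets_M: "sets M = sets (PiM (insert i J) (\<lambda>_. borel))"
    and sets_N: "sets N = sets (PiM (insert i J) (\<lambda>_. borel))"
    and char_eq: "\<And>a. char_PiM M (insert i J) a = char_PiM N (insert i J) a"
  shows "M = N"
proof -
  have box: "emeasure M (Pi\<^sub>E (insert i J) F) = emeasure N (Pi\<^sub>E (insert i J) F)"
    if F: "\<And>j. j \<in> insert i J \<Longrightarrow> F j \<in> sets borel" for F
  proof -
    have "slice_marginal M i (F i) J = slice_marginal N i (F i) J"
    proof (rule IH)
      show "char_PiM (slice_marginal M i (F i) J) J a = char_PiM (slice_marginal N i (F i) J) J a" for a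
        using slab_integrals_eq_if_char_PiM_eq[OF i J M N sets_M sets_N char_eq, of "F i" a] F
        by (simp add: char_PiM_slice_marginal[OF M sets_M] char_PiM_slice_marginal[OF N sets_N])
    qed (use F finite_measure_slice_marginal[OF M sets_M] finite_measure_slice_marginal[OF N sets_N]
        in auto)
    then show ?thesis
      using F emeasure_slice_marginal_PiE[OF M sets_M _ i J, of "F i" F]
        emeasure_slice_marginal_PiE[OF N sets_N _ i J, of "F i" F]
      by (simp add: fun_upd_idem)
  qed
  show ?thesis
  proof (rule measure_eqI_PiM_finite[where A = "\<lambda>_. space (PiM (insert i J) (\<lambda>_. borel))"])
    show "range (\<lambda>_. space (PiM (insert i J) (\<lambda>_. borel))) \<subseteq>
        prod_algebra (insert i J) (\<lambda>_. borel :: real measure)"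
      using space_in_prod_algebra[of "insert i J" "\<lambda>_. borel :: real measure"] by (auto simp: space_PiM)
    show "emeasure M (space (PiM (insert i J) (\<lambda>_. borel))) \<noteq> \<infinity>"
      using sets_eq_imp_space_eq[OF sets_M] finite_measure.emeasure_finite[OF M] by simp
  qed (use box J sets_M sets_N in auto)
qed

lemma PiM_eq_if_char_PiM_eq:
  fixes M N :: "('i \<Rightarrow> real) measure"
  assumes "finite I" "finite_measure M" "finite_measure N"
    "sets M = sets (PiM I (\<lambda>_. borel))" "sets N = sets (PiM I (\<lambda>_. borel))"
    "\<And>a. char_PiM M I a = char_PiM N I a"
  shows "M = N"
  using assms
proof (induction I arbitrary: M N rule: finite_induct)
  case empty
  interpret M: finite_measure M by fact
  interpret N: finite_measure N by fact
  have space: "space M = {\<lambda>_. undefined}" "space N = {\<lambda>_. undefined}"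
    using sets_eq_imp_space_eq[OF empty(3)] sets_eq_imp_space_eq[OF empty(4)]
    by (simp_all add: PiM_empty)
  have "measure M {\<lambda>_. undefined} = measure N {\<lambda>_. undefined}"
    using empty(5)[of "\<lambda>_. 0"] space by (simp add: char_PiM_def scaleR_conv_of_real)
  moreover have "A = {} \<or> A = {\<lambda>_. undefined}" if "A \<in> sets M" for A
    using sets.sets_into_space[OF that] space by (auto simp: subset_singleton_iff)
  ultimately show "M = N"
    using empty(3,4) by (intro measure_eqI) (simp, metis M.emeasure_eq_measure N.emeasure_eq_measure emeasure_empty)
next
  case (insert i J)
  show ?case
    by (rule PiM_eq_if_char_PiM_eq_insert[OF insert(2,1) insert(3)]) (use insert in auto)
qed

lemma borel_measurable_vec_nth [measurable]: "(\<lambda>x::real^'n. x $ j) \<in> borel_measurable borel"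
  by (simp add: bounded_linear_vec_nth borel_measurable_continuous_onI linear_continuous_on)

lemma borel_measurable_vec_lambda:
  assumes "\<And>j. (\<lambda>x. f x j) \<in> borel_measurable M"
  shows "(\<lambda>x. \<chi> j. f x j :: real^'n) \<in> borel_measurable M"
proof (subst borel_measurable_euclidean_space, intro ballI)
  fix b :: "real^'n" assume "b \<in> Basis"
  then obtain k where "b = axis k 1" by (auto simp: Basis_vec_def)
  then show "(\<lambda>x. (\<chi> j. f x j) \<bullet> b) \<in> borel_measurable M"
    using assms by (simp add: inner_axis)
qed

definition flatten :: "'i set \<Rightarrow> ('i \<Rightarrow> real^'n) \<Rightarrow> ('i \<times> 'n \<Rightarrow> real)" where
  "flatten T y = restrict (\<lambda>(t, j). y t $ j) (T \<times> UNIV)"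

definition unflatten :: "'i set \<Rightarrow> ('i \<times> 'n \<Rightarrow> real) \<Rightarrow> ('i \<Rightarrow> real^'n)" where
  "unflatten T z = restrict (\<lambda>t. \<chi> j. z (t, j)) T"

lemma flatten_measurable:
  "flatten T \<in> measurable (PiM T (\<lambda>_. borel)) (PiM (T \<times> UNIV) (\<lambda>_. borel :: real measure))"
  unfolding flatten_def by (rule measurable_restrict) auto

lemma unflatten_measurable:
  "unflatten T \<in> measurable (PiM (T \<times> UNIV) (\<lambda>_. borel :: real measure)) (PiM T (\<lambda>_. borel))"
  unfolding unflatten_def by (rule measurable_restrict, rule borel_measurable_vec_lambda) auto

lemma char_PiM_distr_flatten:
  fixes L :: "('i \<Rightarrow> real^'n) measure"
  assumes "finite T" and sets_L: "sets L = sets (PiM T (\<lambda>_. borel))"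
  shows "char_PiM (distr L (PiM (T \<times> UNIV) (\<lambda>_. borel)) (flatten T)) (T \<times> UNIV) b =
    (CLINT y|L. iexp (\<Sum>t\<in>T. (\<chi> j. b (t, j)) \<bullet> y t))"
proof -
  have "(\<Sum>tj\<in>T \<times> UNIV. b tj * flatten T y tj) = (\<Sum>t\<in>T. \<Sum>j\<in>UNIV. b (t, j) * y t $ j)" for y
    unfolding sum.cartesian_product by (intro sum.cong) (auto simp: flatten_def)
  then have "(\<Sum>tj\<in>T \<times> UNIV. b tj * flatten T y tj) = (\<Sum>t\<in>T. (\<chi> j. b (t, j)) \<bullet> y t)" for y
    by (simp add: inner_vec_def)
  then show ?thesis
    unfolding char_PiM_def using flatten_measurable assms
    by (subst integral_distr) (auto simp: measurable_cong_sets[OF sets_L refl])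
qed

lemma distr_unflatten_flatten:
  fixes L :: "('i \<Rightarrow> real^'n) measure"
  assumes sets_L: "sets L = sets (PiM T (\<lambda>_. borel))"
  shows "distr (distr L (PiM (T \<times> UNIV) (\<lambda>_. borel)) (flatten T)) (PiM T (\<lambda>_. borel)) (unflatten T) = L"
proof -
  have "unflatten T (flatten T y) = y" if "y \<in> space L" for y
    using that sets_eq_imp_space_eq[OF sets_L]
    by (auto simp: unflatten_def flatten_def space_PiM PiE_def extensional_def vec_eq_iff)
  then have "distr L (PiM T (\<lambda>_. borel)) (\<lambda>y. unflatten T (flatten T y)) = L"
    using distr_cong[OF refl refl, of L "\<lambda>y. unflatten T (flatten T y)" "\<lambda>y. y"]
      distr_id2[OF sets_L[symmetric]]
    by simp
  moreover have "flatten T \<in> measurable L (PiM (T \<times> UNIV) (\<lambda>_. borel))"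
    using flatten_measurable by (simp add: measurable_cong_sets[OF sets_L refl])
  ultimately show ?thesis
    by (simp add: distr_distr[OF unflatten_measurable] comp_def)
qed

lemma PiM_vec_eq_if_char_eq:
  fixes M N :: "('i \<Rightarrow> real^'n) measure"
  assumes T: "finite T" and M: "finite_measure M" and N: "finite_measure N"
    and sets_M: "sets M = sets (PiM T (\<lambda>_. borel))" and sets_N: "sets N = sets (PiM T (\<lambda>_. borel))"
    and char_eq: "\<And>a. (CLINT y|M. iexp (\<Sum>t\<in>T. a t \<bullet> y t)) = (CLINT y|N. iexp (\<Sum>t\<in>T. a t \<bullet> y t))"
  shows "M = N"
proof -
  have "distr M (PiM (T \<times> UNIV) (\<lambda>_. borel)) (flatten T) = distr N (PiM (T \<times> UNIV) (\<lambda>_. borel)) (flatten T)"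
    using T M N flatten_measurable char_eq
    by (intro PiM_eq_if_char_PiM_eq)
      (auto intro!: finite_measure.finite_measure_distr simp: char_PiM_distr_flatten[OF T sets_M]
        char_PiM_distr_flatten[OF T sets_N] measurable_cong_sets[OF sets_M refl]
        measurable_cong_sets[OF sets_N refl])
  then show ?thesis
    using distr_unflatten_flatten[OF sets_M] distr_unflatten_flatten[OF sets_N] by metis
qed

section \<open>The characteristic function of the output process\<close>

lemma matrix_vector_mult_sum: "(X :: real^'n^'m) *v (\<Sum>i\<in>S. f i) = (\<Sum>i\<in>S. X *v f i)"
  by (induction S rule: infinite_finite_induct) (simp_all add: matrix_vector_right_distrib)

lemma transpose_mult_inner: "(transpose (X :: real^'n^'m) *v y) \<bullet> z = y \<bullet> (X *v z)"
  by (simp add: dot_lmul_matrix)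

lemma transpose_mult_inner_transpose_mult:
  "(transpose (X :: real^'n^'m) *v y) \<bullet> (transpose Y *v z) = y \<bullet> ((X ** transpose Y) *v z)"
  using transpose_mult_inner[of X y "transpose Y *v z"] by (simp only: matrix_vector_mul_assoc)

lemma borel_measurable_matrix_vector_mult [measurable]:
  "(\<lambda>v. (X :: real^'n^'m) *v v) \<in> borel_measurable borel"
  by (intro borel_measurable_continuous_onI linear_continuous_on matrix_vector_mul_bounded_linear)

lemma char_gauss_real:
  assumes "0 \<le> v"
  shows "(CLINT x|gauss_real m v. iexp (t * x)) = iexp (t * m) * exp (- (v * t\<^sup>2) / 2)"
proof (cases "v = 0")
  case True
  then show ?thesis by (simp add: gauss_real_def integral_return)
next
  case False
  define s where "s = sqrt v"
  have s_pos: "0 < s" and s_square: "s\<^sup>2 = v"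
    using assms False by (simp_all add: s_def)
  have standardize: "\<bar>s\<bar> *\<^sub>R (normal_density m s (m + s * y) *\<^sub>R iexp (t * (m + s * y))) =
      iexp (t * m) * (std_normal_density y *\<^sub>R iexp (t * s * y))" for y
  proof -
    have "\<bar>s\<bar> * normal_density m s (m + s * y) = std_normal_density y"
      using s_pos by (simp add: normal_density_def real_sqrt_mult field_simps)
    moreover have "iexp (t * (m + s * y)) = iexp (t * m) * iexp (t * s * y)"
      by (simp add: exp_add[symmetric] algebra_simps)
    ultimately show ?thesis
      by (simp add: scaleR_conv_of_real ac_simps flip: of_real_mult)
  qed
  have "(CLINT x|gauss_real m v. iexp (t * x)) = (CLINT x|lborel. normal_density m s x *\<^sub>R iexp (t * x))"
    using False by (simp add: gauss_real_def s_def integral_density)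
  also have "\<dots> = \<bar>s\<bar> *\<^sub>R (CLINT y|lborel. normal_density m s (m + s * y) *\<^sub>R iexp (t * (m + s * y)))"
    using s_pos by (intro lborel_integral_real_affine) simp
  also have "\<dots> = iexp (t * m) * (CLINT y|lborel. std_normal_density y *\<^sub>R iexp (t * s * y))"
    by (simp only: standardize flip: integral_scaleR_right integral_mult_right_zero)
  also have "(CLINT y|lborel. std_normal_density y *\<^sub>R iexp (t * s * y)) = char std_normal_distribution (t * s)"
    unfolding char_def by (rule integral_density[symmetric]) auto
  also have "\<dots> = exp (- (v * t\<^sup>2) / 2)"
    using s_square by (simp add: char_std_normal_distribution power_mult_distrib mult.commute)
  finally show ?thesis .
qed

lemma (in prob_space) indep_var_compose_if_pair_law:
  fixes X :: "'a \<Rightarrow> 'x::second_countable_topology" and Y :: "'a \<Rightarrow> 'y::second_countable_topology"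
    and f :: "'x \<Rightarrow> 'z::second_countable_topology" and g :: "'y \<Rightarrow> 'z"
  assumes [measurable]: "X \<in> borel_measurable M" "Y \<in> borel_measurable M"
    "f \<in> borel_measurable borel" "g \<in> borel_measurable borel"
    and pair_law: "distr M borel (\<lambda>\<omega>. (X \<omega>, Y \<omega>)) = distr M borel X \<Otimes>\<^sub>M distr M borel Y"
  shows "indep_var borel (\<lambda>\<omega>. f (X \<omega>)) borel (\<lambda>\<omega>. g (Y \<omega>))"
proof -
  have "prob_space (distr M borel (\<lambda>\<omega>. g (Y \<omega>)))"
    by (rule prob_space_distr) simp
  then have "distr M borel (\<lambda>\<omega>. f (X \<omega>)) \<Otimes>\<^sub>M distr M borel (\<lambda>\<omega>. g (Y \<omega>)) =
      distr (distr M borel X \<Otimes>\<^sub>M distr M borel Y) (borel \<Otimes>\<^sub>M borel) (\<lambda>(x, y). (f x, g y))"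
    using pair_measure_distr[of f "distr M borel X" borel g "distr M borel Y" borel]
    by (simp add: distr_distr comp_def prob_space_imp_sigma_finite)
  also have "\<dots> = distr M (borel \<Otimes>\<^sub>M borel) (\<lambda>\<omega>. (f (X \<omega>), g (Y \<omega>)))"
  proof -
    have "(\<lambda>(x, y). (f x, g y)) \<in> measurable (borel :: ('x \<times> 'y) measure) (borel \<Otimes>\<^sub>M borel)"
      unfolding borel_prod[symmetric] by measurable
    then show ?thesis
      unfolding pair_law[symmetric] by (subst distr_distr) (simp_all add: comp_def borel_prod)
  qed
  finally show ?thesis
    by (simp add: indep_var_distribution_eq)
qed

lemma char_inner_noise:
  assumes noise: "noise_model M mu Psi w nu" and Psi_psd: "\<forall>a. 0 \<le> a \<bullet> (Psi *v a)"
  shows "(CLINT \<omega>|M. iexp (b \<bullet> w \<tau> \<omega> + c \<bullet> nu \<tau> \<omega>)) =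
    iexp (b \<bullet> mu) * exp (- (b \<bullet> b + c \<bullet> (Psi *v c)) / 2)"
proof -
  from noise have [measurable]: "w \<tau> \<in> borel_measurable M" "nu \<tau> \<in> borel_measurable M"
    and w_gauss: "gaussian_vec M (w \<tau>) mu (mat 1)" and nu_gauss: "gaussian_vec M (nu \<tau>) 0 Psi"
    and pair_law: "distr M borel (\<lambda>\<omega>. (w \<tau> \<omega>, nu \<tau> \<omega>)) = distr M borel (w \<tau>) \<Otimes>\<^sub>M distr M borel (nu \<tau>)"
    unfolding noise_model_def by auto
  interpret prob_space M using noise by (simp add: noise_model_def)
  have "indep_var borel (\<lambda>\<omega>. b \<bullet> w \<tau> \<omega>) borel (\<lambda>\<omega>. c \<bullet> nu \<tau> \<omega>)"
    by (rule indep_var_compose_if_pair_law[OF _ _ _ _ pair_law]) simp_all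
  then have "char (distr M borel (\<lambda>\<omega>. b \<bullet> w \<tau> \<omega> + c \<bullet> nu \<tau> \<omega>)) 1 =
      char (distr M borel (\<lambda>\<omega>. b \<bullet> w \<tau> \<omega>)) 1 * char (distr M borel (\<lambda>\<omega>. c \<bullet> nu \<tau> \<omega>)) 1"
    by (rule char_distr_add)
  also have "distr M borel (\<lambda>\<omega>. b \<bullet> w \<tau> \<omega>) = gauss_real (b \<bullet> mu) (b \<bullet> b)"
    using w_gauss by (simp add: gaussian_vec_def)
  also have "distr M borel (\<lambda>\<omega>. c \<bullet> nu \<tau> \<omega>) = gauss_real 0 (c \<bullet> (Psi *v c))"
    using nu_gauss by (simp add: gaussian_vec_def)
  finally show ?thesis
    using Psi_psd char_gauss_real[of "b \<bullet> b" "b \<bullet> mu" 1] char_gauss_real[of "c \<bullet> (Psi *v c)" 0 1]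
    by (simp add: char_def integral_distr char_gauss_real exp_add[symmetric] add_divide_distrib
        flip: of_real_mult)
qed

definition noise_free_output :: "real^'n^'n \<Rightarrow> real^'m^'n \<Rightarrow> real^'n^'p \<Rightarrow> real^'n \<Rightarrow> (nat \<Rightarrow> real^'m)
    \<Rightarrow> nat \<Rightarrow> real^'p" where
  "noise_free_output A B C x0 u t =
    (C ** matpow A t) *v x0 + (\<Sum>\<tau><t. (C ** matpow A (t - 1 - \<tau>) ** B) *v u \<tau>)"

text \<open>The vector against which \<open>w \<tau>\<close> is paired in \<open>\<Sum>t\<in>T. a t \<bullet> y t\<close>.\<close>
definition noise_weight :: "real^'n^'n \<Rightarrow> real^'l^'n \<Rightarrow> real^'n^'p \<Rightarrow> nat set \<Rightarrow> (nat \<Rightarrow> real^'p)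
    \<Rightarrow> nat \<Rightarrow> real^'l" where
  "noise_weight A G C T a \<tau> = (\<Sum>t\<in>{t\<in>T. \<tau> < t}. transpose (C ** matpow A (t - 1 - \<tau>) ** G) *v a t)"

lemma output_proc_eq:
  "output_proc A B G C w nu x0 u t \<omega> = noise_free_output A B C x0 u t +
    (\<Sum>\<tau><t. (C ** matpow A (t - 1 - \<tau>) ** G) *v w \<tau> \<omega>) + nu t \<omega>"
  by (simp add: output_proc_def state_proc_def noise_free_output_def matrix_vector_right_distrib
      matrix_vector_mult_sum matrix_vector_mul_assoc matrix_mul_assoc sum.distrib)

lemma output_proc_borel_measurable:
  assumes "noise_model M mu Psi w nu"
  shows "output_proc A B G C w nu x0 u t \<in> borel_measurable M"
proof -
  have [measurable]: "w \<tau> \<in> borel_measurable M" "nu \<tau> \<in> borel_measurable M" for \<tau>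
    using assms by (simp_all add: noise_model_def)
  show ?thesis
    unfolding output_proc_def state_proc_def by measurable
qed

lemma inner_output_proc_sum:
  assumes T: "finite T" "T \<subseteq> {..<N}"
  shows "(\<Sum>t\<in>T. a t \<bullet> output_proc A B G C w nu x0 u t \<omega>) =
    (\<Sum>t\<in>T. a t \<bullet> noise_free_output A B C x0 u t) +
    (\<Sum>\<tau><N. noise_weight A G C T a \<tau> \<bullet> w \<tau> \<omega> + (if \<tau> \<in> T then a \<tau> else 0) \<bullet> nu \<tau> \<omega>)"
proof -
  have "(\<Sum>t\<in>T. \<Sum>\<tau><t. a t \<bullet> ((C ** matpow A (t - 1 - \<tau>) ** G) *v w \<tau> \<omega>)) =
      (\<Sum>t\<in>T. \<Sum>\<tau>\<in>{\<tau>\<in>{..<N}. \<tau> < t}. a t \<bullet> ((C ** matpow A (t - 1 - \<tau>) ** G) *v w \<tau> \<omega>))"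
    using T by (intro sum.cong refl arg_cong2[where f = sum]) auto
  also have "\<dots> = (\<Sum>\<tau><N. noise_weight A G C T a \<tau> \<bullet> w \<tau> \<omega>)"
    using T by (simp add: sum.swap_restrict noise_weight_def inner_sum_left dot_lmul_matrix)
  finally have noise: "(\<Sum>t\<in>T. a t \<bullet> (\<Sum>\<tau><t. (C ** matpow A (t - 1 - \<tau>) ** G) *v w \<tau> \<omega>)) =
      (\<Sum>\<tau><N. noise_weight A G C T a \<tau> \<bullet> w \<tau> \<omega>)"
    by (simp add: inner_sum_right)
  have "(\<Sum>t\<in>T. a t \<bullet> nu t \<omega>) = (\<Sum>\<tau><N. (if \<tau> \<in> T then a \<tau> else 0) \<bullet> nu \<tau> \<omega>)"
    using T by (simp add: if_distrib[of "\<lambda>v. v \<bullet> _"] sum.If_cases Int_absorb1)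
  then show ?thesis
    unfolding output_proc_eq inner_add_right sum.distrib noise by simp
qed

lemma prod_iexp_mult_exp:
  fixes \<beta> \<gamma> :: "'i \<Rightarrow> real"
  shows "finite A \<Longrightarrow>
    (\<Prod>i\<in>A. iexp (\<beta> i) * exp (\<gamma> i)) = iexp (\<Sum>i\<in>A. \<beta> i) * exp (\<Sum>i\<in>A. \<gamma> i)"
  by (induction A rule: finite_induct) (simp_all add: exp_add algebra_simps)

lemma char_sum_inner_noise:
  assumes noise: "noise_model M mu Psi w nu" and Psi_psd: "\<forall>a. 0 \<le> a \<bullet> (Psi *v a)"
  shows "(CLINT \<omega>|M. iexp (\<Sum>\<tau><N. b \<tau> \<bullet> w \<tau> \<omega> + c \<tau> \<bullet> nu \<tau> \<omega>)) =
    iexp (\<Sum>\<tau><N. b \<tau> \<bullet> mu) * exp (\<Sum>\<tau><N. - (b \<tau> \<bullet> b \<tau> + c \<tau> \<bullet> (Psi *v c \<tau>)) / 2)"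
proof -
  interpret prob_space M using noise by (simp add: noise_model_def)
  define Z where "Z = (\<lambda>\<tau> \<omega>. b \<tau> \<bullet> w \<tau> \<omega> + c \<tau> \<bullet> nu \<tau> \<omega>)"
  have [measurable]: "w \<tau> \<in> borel_measurable M" "nu \<tau> \<in> borel_measurable M" for \<tau>
    using noise by (simp_all add: noise_model_def)
  have "indep_vars (\<lambda>_. borel) (\<lambda>\<tau> \<omega>. (w \<tau> \<omega>, nu \<tau> \<omega>)) UNIV"
    using noise by (simp add: noise_model_def)
  then have "indep_vars (\<lambda>_. borel) (\<lambda>\<tau> \<omega>. b \<tau> \<bullet> fst (w \<tau> \<omega>, nu \<tau> \<omega>) + c \<tau> \<bullet> snd (w \<tau> \<omega>, nu \<tau> \<omega>)) UNIV"
    by (rule indep_vars_compose2) (intro borel_measurable_continuous_onI continuous_intros)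
  then have "indep_vars (\<lambda>_. borel) Z UNIV"
    by (simp add: Z_def)
  then have indep: "indep_vars (\<lambda>_. borel) Z {..<N}"
    by (rule indep_vars_subset) simp
  have "(CLINT \<omega>|M. iexp (\<Sum>\<tau><N. Z \<tau> \<omega>)) = char (distr M borel (\<lambda>\<omega>. \<Sum>\<tau><N. Z \<tau> \<omega>)) 1"
    unfolding char_def by (subst integral_distr) (simp_all add: Z_def)
  also have "\<dots> = (\<Prod>\<tau><N. char (distr M borel (Z \<tau>)) 1)"
    by (rule char_distr_sum[OF indep])
  also have "\<dots> = (\<Prod>\<tau><N. iexp (b \<tau> \<bullet> mu) * exp (- (b \<tau> \<bullet> b \<tau> + c \<tau> \<bullet> (Psi *v c \<tau>)) / 2))"
    unfolding char_def
    by (intro prod.cong refl, subst integral_distr)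
      (simp_all add: Z_def char_inner_noise[OF noise Psi_psd, simplified])
  finally show ?thesis
    by (simp only: Z_def prod_iexp_mult_exp[OF finite_lessThan])
qed

lemma char_output_proc:
  assumes noise: "noise_model M mu Psi w nu" and Psi_psd: "\<forall>a. 0 \<le> a \<bullet> (Psi *v a)"
    and T: "finite T" "T \<subseteq> {..<N}"
  shows "(CLINT \<omega>|M. iexp (\<Sum>t\<in>T. a t \<bullet> output_proc A B G C w nu x0 u t \<omega>)) =
    iexp ((\<Sum>t\<in>T. a t \<bullet> noise_free_output A B C x0 u t) + (\<Sum>\<tau><N. noise_weight A G C T a \<tau> \<bullet> mu)) *
    exp (- ((\<Sum>\<tau><N. noise_weight A G C T a \<tau> \<bullet> noise_weight A G C T a \<tau>) +
      (\<Sum>t\<in>T. a t \<bullet> (Psi *v a t))) / 2)"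
proof -
  define b where "b = noise_weight A G C T a"
  define a' where "a' \<tau> = (if \<tau> \<in> T then a \<tau> else 0)" for \<tau>
  have "(\<Sum>\<tau><N. a' \<tau> \<bullet> (Psi *v a' \<tau>)) = (\<Sum>t\<in>T. a t \<bullet> (Psi *v a t))"
    using T by (simp add: a'_def if_distrib[of "\<lambda>v. v \<bullet> (Psi *v v)"] sum.If_cases Int_absorb1)
  then have variance: "(\<Sum>\<tau><N. - (b \<tau> \<bullet> b \<tau> + a' \<tau> \<bullet> (Psi *v a' \<tau>)) / 2) =
      - ((\<Sum>\<tau><N. b \<tau> \<bullet> b \<tau>) + (\<Sum>t\<in>T. a t \<bullet> (Psi *v a t))) / 2"
    by (simp add: sum_subtractf sum_negf flip: sum_divide_distrib)
  have "(CLINT \<omega>|M. iexp (\<Sum>t\<in>T. a t \<bullet> output_proc A B G C w nu x0 u t \<omega>)) =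
      (CLINT \<omega>|M. iexp (\<Sum>t\<in>T. a t \<bullet> noise_free_output A B C x0 u t) *
        iexp (\<Sum>\<tau><N. b \<tau> \<bullet> w \<tau> \<omega> + a' \<tau> \<bullet> nu \<tau> \<omega>))"
    unfolding inner_output_proc_sum[OF T] b_def a'_def
    by (simp only: of_real_add distrib_left exp_add)
  also have "\<dots> = iexp (\<Sum>t\<in>T. a t \<bullet> noise_free_output A B C x0 u t) *
      (CLINT \<omega>|M. iexp (\<Sum>\<tau><N. b \<tau> \<bullet> w \<tau> \<omega> + a' \<tau> \<bullet> nu \<tau> \<omega>))"
    by (rule integral_mult_right_zero)
  finally show ?thesis
    unfolding char_sum_inner_noise[OF noise Psi_psd] variance unfolding b_def
    by (simp only: of_real_add distrib_left exp_add mult.assoc)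
qed

section \<open>Unobservable subspaces\<close>

lemma linear_funpow:
  fixes f :: "'a::real_vector \<Rightarrow> 'a"
  shows "linear f \<Longrightarrow> linear (f ^^ n)"
  by (induction n) (simp_all add: linear_compose linear_id)

lemma decreasing_subspaces_stop:
  fixes V :: "nat \<Rightarrow> 'a::euclidean_space set"
  assumes subspace: "\<And>k. subspace (V k)" and decreasing: "\<And>k. V (Suc k) \<subseteq> V k"
  shows "\<exists>k\<le>DIM('a). V (Suc k) = V k"
proof (rule ccontr)
  assume "\<not> ?thesis"
  then have "V (Suc k) \<subset> V k" if "k \<le> DIM('a)" for k
    using that decreasing[of k] by auto
  then have dim_drop: "dim (V (Suc k)) < dim (V k)" if "k \<le> DIM('a)" for k
    using that subspace by (metis dim_psubset span_eq_iff)
  have "dim (V k) + k \<le> dim (V 0)" if "k \<le> Suc DIM('a)" for k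
    using that
  proof (induction k)
    case (Suc k)
    then have "dim (V (Suc k)) < dim (V k)" "dim (V k) + k \<le> dim (V 0)"
      by (simp_all add: dim_drop)
    then show ?case by linarith
  qed simp
  from this[of "Suc DIM('a)"] show False
    using dim_subset_UNIV[of "V 0"] by simp
qed

text \<open>This replaces the Cayley--Hamilton theorem: the kernels of the first \<open>k\<close> outputs form a
  decreasing chain of subspaces, and once two consecutive members agree all later ones do, because
  \<open>V (Suc k) = {x. h x = 0 \<and> f x \<in> V k}\<close>.\<close>
lemma unobservable_stabilizes:
  fixes f :: "'a::euclidean_space \<Rightarrow> 'a" and h :: "'a \<Rightarrow> 'b::real_vector"
  assumes f: "linear f" and h: "linear h" and x: "\<forall>j<DIM('a). h ((f ^^ j) x) = 0"
  shows "h ((f ^^ j) x) = 0"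
proof -
  define V where "V k = {x. \<forall>j<k. h ((f ^^ j) x) = 0}" for k
  have antimono: "V m \<subseteq> V k" if "k \<le> m" for k m
    using that by (auto simp: V_def)
  have "subspace (V k)" for k
    by (auto simp: V_def subspace_def linear_add[OF h] linear_add[OF linear_funpow[OF f]] linear_0[OF h]
        linear_0[OF linear_funpow[OF f]] linear_scale[OF h] linear_scale[OF linear_funpow[OF f]])
  moreover have "V (Suc k) \<subseteq> V k" for k
    by (rule antimono) simp
  ultimately obtain k where k: "k \<le> DIM('a)" "V (Suc k) = V k"
    using decreasing_subspaces_stop by meson
  have V_Suc: "V (Suc k) = {x. h x = 0 \<and> f x \<in> V k}" for k
    by (auto simp: V_def less_Suc_eq_0_disj funpow_Suc_right simp del: funpow.simps)
  have stable: "V m = V k" if "k \<le> m" for m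
    using that
  proof (induction m rule: dec_induct)
    case (step m)
    then have "V (Suc m) = V m"
      using k(2) V_Suc antimono[of k "Suc m"] by (cases "m = k") auto
    then show ?case using step.IH V_Suc by auto
  qed simp
  have "x \<in> V (max (Suc j) DIM('a))"
    using stable[of "max (Suc j) DIM('a)"] stable[of "DIM('a)"] k(1) x by (simp add: V_def)
  then show ?thesis by (simp add: V_def)
qed

lemma Obs_eq_iff_outputs_eq:
  fixes A1 :: "real^'n1^'n1" and C1 :: "real^'n1^'p" and A2 :: "real^'n2^'n2" and C2 :: "real^'n2^'p"
  shows "Obs (CARD('n1) + CARD('n2)) A1 C1 x1 = Obs (CARD('n1) + CARD('n2)) A2 C2 x2 \<longleftrightarrow>
    (\<forall>j. (C1 ** matpow A1 j) *v x1 = (C2 ** matpow A2 j) *v x2)"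
proof
  define f where "f z = (A1 *v fst z, A2 *v snd z)" for z
  define h where "h z = C1 *v fst z - C2 *v snd z" for z
  have f_pow: "(f ^^ j) z = (matpow A1 j *v fst z, matpow A2 j *v snd z)" for j z
    by (induction j arbitrary: z)
      (simp_all add: f_def funpow_Suc_right matrix_vector_mul_assoc del: funpow.simps)
  have "linear f" "linear h"
    unfolding f_def h_def
    by (auto intro!: linearI simp: algebra_simps)
  moreover assume "Obs (CARD('n1) + CARD('n2)) A1 C1 x1 = Obs (CARD('n1) + CARD('n2)) A2 C2 x2"
  then have "\<forall>j<DIM((real^'n1) \<times> (real^'n2)). h ((f ^^ j) (x1, x2)) = 0"
    by (simp add: Obs_def fun_eq_iff h_def f_pow matrix_vector_mul_assoc) metis
  ultimately have "h ((f ^^ j) (x1, x2)) = 0" for j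
    by (rule unobservable_stabilizes)
  then show "\<forall>j. (C1 ** matpow A1 j) *v x1 = (C2 ** matpow A2 j) *v x2"
    by (simp add: h_def f_pow matrix_vector_mul_assoc)
qed (simp add: Obs_def fun_eq_iff)

section \<open>Equivalent stochastic behaviour\<close>

lemma zero_if_iexp_inner_eq_1:
  fixes d :: "'a::real_inner"
  assumes "\<And>e. iexp (e \<bullet> d) = 1"
  shows "d = 0"
proof (rule ccontr)
  assume "d \<noteq> 0"
  then have "((pi / (d \<bullet> d)) *\<^sub>R d) \<bullet> d = pi" by simp
  then have "iexp pi = 1" using assms by metis
  then show False by (simp add: iexp_eq_cis)
qed

lemma integral_iexp_finite_dim_distr:
  fixes Y :: "nat \<Rightarrow> 'a \<Rightarrow> real^'p"
  assumes Y: "\<And>t. Y t \<in> borel_measurable M" and T: "finite T"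
  shows "(CLINT y|distr M (PiM T (\<lambda>_. borel)) (\<lambda>\<omega>. restrict (\<lambda>t. Y t \<omega>) T). iexp (\<Sum>t\<in>T. a t \<bullet> y t)) =
    (CLINT \<omega>|M. iexp (\<Sum>t\<in>T. a t \<bullet> Y t \<omega>))"
proof -
  have "(\<lambda>\<omega>. restrict (\<lambda>t. Y t \<omega>) T) \<in> measurable M (PiM T (\<lambda>_. borel))"
    using Y by (intro measurable_restrict) auto
  then show ?thesis
    by (subst integral_distr) (auto intro!: Bochner_Integration.integral_cong arg_cong[where f = iexp] sum.cong)
qed

lemma stoch_equiv_iff_char_eq:
  fixes Y1 :: "nat \<Rightarrow> 'a \<Rightarrow> real^'p" and Y2 :: "nat \<Rightarrow> 'b \<Rightarrow> real^'p"
  assumes M1: "prob_space M1" and M2: "prob_space M2"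
    and Y1: "\<And>t. Y1 t \<in> borel_measurable M1" and Y2: "\<And>t. Y2 t \<in> borel_measurable M2"
  shows "stoch_equiv M1 Y1 M2 Y2 \<longleftrightarrow> (\<forall>T a. finite T \<longrightarrow>
    (CLINT \<omega>|M1. iexp (\<Sum>t\<in>T. a t \<bullet> Y1 t \<omega>)) = (CLINT \<omega>|M2. iexp (\<Sum>t\<in>T. a t \<bullet> Y2 t \<omega>)))"
proof -
  have "distr M1 (PiM T (\<lambda>_. borel)) (\<lambda>\<omega>. restrict (\<lambda>t. Y1 t \<omega>) T) =
      distr M2 (PiM T (\<lambda>_. borel)) (\<lambda>\<omega>. restrict (\<lambda>t. Y2 t \<omega>) T) \<longleftrightarrow>
    (\<forall>a. (CLINT \<omega>|M1. iexp (\<Sum>t\<in>T. a t \<bullet> Y1 t \<omega>)) = (CLINT \<omega>|M2. iexp (\<Sum>t\<in>T. a t \<bullet> Y2 t \<omega>)))"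
    if T: "finite T" for T
  proof
    assume char_eq: "\<forall>a. (CLINT \<omega>|M1. iexp (\<Sum>t\<in>T. a t \<bullet> Y1 t \<omega>)) =
      (CLINT \<omega>|M2. iexp (\<Sum>t\<in>T. a t \<bullet> Y2 t \<omega>))"
    have "(CLINT y|distr M1 (PiM T (\<lambda>_. borel)) (\<lambda>\<omega>. restrict (\<lambda>t. Y1 t \<omega>) T). iexp (\<Sum>t\<in>T. a t \<bullet> y t)) =
        (CLINT y|distr M2 (PiM T (\<lambda>_. borel)) (\<lambda>\<omega>. restrict (\<lambda>t. Y2 t \<omega>) T). iexp (\<Sum>t\<in>T. a t \<bullet> y t))"
      for a
      unfolding integral_iexp_finite_dim_distr[where Y = Y1, OF Y1 T]
        integral_iexp_finite_dim_distr[where Y = Y2, OF Y2 T]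
      using char_eq by blast
    moreover have "(\<lambda>\<omega>. restrict (\<lambda>t. Y1 t \<omega>) T) \<in> measurable M1 (PiM T (\<lambda>_. borel))"
      "(\<lambda>\<omega>. restrict (\<lambda>t. Y2 t \<omega>) T) \<in> measurable M2 (PiM T (\<lambda>_. borel))"
      using Y1 Y2 by (auto intro!: measurable_restrict)
    ultimately show "distr M1 (PiM T (\<lambda>_. borel)) (\<lambda>\<omega>. restrict (\<lambda>t. Y1 t \<omega>) T) =
        distr M2 (PiM T (\<lambda>_. borel)) (\<lambda>\<omega>. restrict (\<lambda>t. Y2 t \<omega>) T)"
      using M1 M2 T
      by (intro PiM_vec_eq_if_char_eq) (auto intro!: prob_space.finite_measure prob_space.prob_space_distr)
  next
    assume "distr M1 (PiM T (\<lambda>_. borel)) (\<lambda>\<omega>. restrict (\<lambda>t. Y1 t \<omega>) T) =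
      distr M2 (PiM T (\<lambda>_. borel)) (\<lambda>\<omega>. restrict (\<lambda>t. Y2 t \<omega>) T)"
    then show "\<forall>a. (CLINT \<omega>|M1. iexp (\<Sum>t\<in>T. a t \<bullet> Y1 t \<omega>)) =
        (CLINT \<omega>|M2. iexp (\<Sum>t\<in>T. a t \<bullet> Y2 t \<omega>))"
      unfolding integral_iexp_finite_dim_distr[where Y = Y1, OF Y1 T, symmetric]
        integral_iexp_finite_dim_distr[where Y = Y2, OF Y2 T, symmetric]
      by simp
  qed
  then show ?thesis
    by (simp add: stoch_equiv_def)
qed

lemma stoch_equiv_iff_char_shift_eq_0:
  fixes Y1 :: "nat \<Rightarrow> 'a \<Rightarrow> real^'p" and Y2 :: "nat \<Rightarrow> 'b \<Rightarrow> real^'p" and d :: "nat \<Rightarrow> real^'p"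
  assumes "prob_space M1" "prob_space M2"
    "\<And>t. Y1 t \<in> borel_measurable M1" "\<And>t. Y2 t \<in> borel_measurable M2"
    and shift: "\<And>T a. finite T \<Longrightarrow> (CLINT \<omega>|M1. iexp (\<Sum>t\<in>T. a t \<bullet> Y1 t \<omega>)) =
      iexp (\<Sum>t\<in>T. a t \<bullet> d t) * (CLINT \<omega>|M2. iexp (\<Sum>t\<in>T. a t \<bullet> Y2 t \<omega>))"
    and nonzero: "\<And>T a. finite T \<Longrightarrow> (CLINT \<omega>|M2. iexp (\<Sum>t\<in>T. a t \<bullet> Y2 t \<omega>)) \<noteq> 0"
  shows "stoch_equiv M1 Y1 M2 Y2 \<longleftrightarrow> (\<forall>t. d t = 0)"
  unfolding stoch_equiv_iff_char_eq[OF assms(1-4)]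
proof (intro iffI allI impI)
  fix j
  assume char_eq: "\<forall>T a. finite T \<longrightarrow>
    (CLINT \<omega>|M1. iexp (\<Sum>t\<in>T. a t \<bullet> Y1 t \<omega>)) = (CLINT \<omega>|M2. iexp (\<Sum>t\<in>T. a t \<bullet> Y2 t \<omega>))"
  have "iexp (e \<bullet> d j) = 1" for e
  proof -
    have "iexp (e \<bullet> d j) * (CLINT \<omega>|M2. iexp (e \<bullet> Y2 j \<omega>)) = (CLINT \<omega>|M2. iexp (e \<bullet> Y2 j \<omega>))"
      using char_eq[rule_format, of "{j}" "\<lambda>_. e"] shift[of "{j}" "\<lambda>_. e"] by simp
    moreover have "(CLINT \<omega>|M2. iexp (e \<bullet> Y2 j \<omega>)) \<noteq> 0"
      using nonzero[of "{j}" "\<lambda>_. e"] by simp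
    ultimately show ?thesis by simp
  qed
  then show "d j = 0" by (rule zero_if_iexp_inner_eq_1)
next
  fix T :: "nat set" and a
  assume "\<forall>t. d t = 0" and "finite T"
  then show "(CLINT \<omega>|M1. iexp (\<Sum>t\<in>T. a t \<bullet> Y1 t \<omega>)) = (CLINT \<omega>|M2. iexp (\<Sum>t\<in>T. a t \<bullet> Y2 t \<omega>))"
    using shift[of T a] by simp
qed

lemma noise_free_output_diff:
  assumes "\<forall>t. C1 ** matpow A1 t ** B1 = C2 ** matpow A2 t ** B2"
  shows "noise_free_output A1 B1 C1 x1 u t - noise_free_output A2 B2 C2 x2 u t =
    (C1 ** matpow A1 t) *v x1 - (C2 ** matpow A2 t) *v x2"
  using assms by (simp add: noise_free_output_def)

lemma noise_weight_inner_mean_eq: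
  assumes "\<forall>t. (C1 ** matpow A1 t ** G1) *v mu1 = (C2 ** matpow A2 t ** G2) *v mu2"
  shows "noise_weight A1 G1 C1 T a \<tau> \<bullet> mu1 = noise_weight A2 G2 C2 T a \<tau> \<bullet> mu2"
  using assms unfolding noise_weight_def inner_sum_left transpose_mult_inner by simp

lemma noise_weight_inner_self_eq:
  assumes "\<forall>h k. C1 ** matpow A1 k ** G1 ** transpose G1 ** transpose (matpow A1 h) ** transpose C1
                 = C2 ** matpow A2 k ** G2 ** transpose G2 ** transpose (matpow A2 h) ** transpose C2"
  shows "noise_weight A1 G1 C1 T a \<tau> \<bullet> noise_weight A1 G1 C1 T a \<tau> =
    noise_weight A2 G2 C2 T a \<tau> \<bullet> noise_weight A2 G2 C2 T a \<tau>"
proof -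
  have gram: "(C1 ** matpow A1 k ** G1) ** transpose (C1 ** matpow A1 h ** G1) =
      (C2 ** matpow A2 k ** G2) ** transpose (C2 ** matpow A2 h ** G2)" for h k
    using assms by (simp add: matrix_transpose_mul matrix_mul_assoc)
  show ?thesis
    unfolding noise_weight_def inner_sum_left inner_sum_right transpose_mult_inner_transpose_mult gram ..
qed

lemma char_output_proc_shift:
  fixes A1 :: "real^'n1^'n1" and B1 :: "real^'m^'n1" and G1 :: "real^'l1^'n1" and C1 :: "real^'n1^'p"
    and A2 :: "real^'n2^'n2" and B2 :: "real^'m^'n2" and G2 :: "real^'l2^'n2" and C2 :: "real^'n2^'p"
  assumes noise1: "noise_model M1 mu1 Psi1 w1 nu1" and noise2: "noise_model M2 mu2 Psi2 w2 nu2"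
    and Psi_psd: "\<forall>a. 0 \<le> a \<bullet> (Psi1 *v a)" and p0: "Psi1 = Psi2"
    and p1: "\<forall>t. C1 ** matpow A1 t ** B1 = C2 ** matpow A2 t ** B2"
    and p2: "\<forall>t. (C1 ** matpow A1 t ** G1) *v mu1 = (C2 ** matpow A2 t ** G2) *v mu2"
    and p3: "\<forall>h k. C1 ** matpow A1 k ** G1 ** transpose G1 ** transpose (matpow A1 h) ** transpose C1
                 = C2 ** matpow A2 k ** G2 ** transpose G2 ** transpose (matpow A2 h) ** transpose C2"
    and T: "finite T"
  shows "(CLINT \<omega>|M1. iexp (\<Sum>t\<in>T. a t \<bullet> output_proc A1 B1 G1 C1 w1 nu1 x1 u t \<omega>)) =
    iexp (\<Sum>t\<in>T. a t \<bullet> ((C1 ** matpow A1 t) *v x1 - (C2 ** matpow A2 t) *v x2)) *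
    (CLINT \<omega>|M2. iexp (\<Sum>t\<in>T. a t \<bullet> output_proc A2 B2 G2 C2 w2 nu2 x2 u t \<omega>))"
proof -
  obtain N where N: "T \<subseteq> {..<N}"
    using finite_nat_bounded[OF T] by blast
  have psd2: "\<forall>a. 0 \<le> a \<bullet> (Psi2 *v a)"
    using Psi_psd p0 by simp
  have "noise_free_output A1 B1 C1 x1 u t =
      ((C1 ** matpow A1 t) *v x1 - (C2 ** matpow A2 t) *v x2) + noise_free_output A2 B2 C2 x2 u t" for t
    using noise_free_output_diff[OF p1, of x1 u t x2] by (simp add: algebra_simps)
  then have noise_free: "(\<Sum>t\<in>T. a t \<bullet> noise_free_output A1 B1 C1 x1 u t) =
      (\<Sum>t\<in>T. a t \<bullet> ((C1 ** matpow A1 t) *v x1 - (C2 ** matpow A2 t) *v x2)) +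
      (\<Sum>t\<in>T. a t \<bullet> noise_free_output A2 B2 C2 x2 u t)"
    by (simp only: inner_add_right sum.distrib)
  show ?thesis
    unfolding char_output_proc[OF noise1 Psi_psd T N] char_output_proc[OF noise2 psd2 T N] noise_free
      noise_weight_inner_mean_eq[OF p2] noise_weight_inner_self_eq[OF p3] p0
    by (simp only: of_real_add distrib_left exp_add ac_simps)
qed

lemma char_output_proc_nonzero:
  assumes "noise_model M mu Psi w nu" "\<forall>a. 0 \<le> a \<bullet> (Psi *v a)" and T: "finite T"
  shows "(CLINT \<omega>|M. iexp (\<Sum>t\<in>T. a t \<bullet> output_proc A B G C w nu x0 u t \<omega>)) \<noteq> 0"
proof -
  obtain N where N: "T \<subseteq> {..<N}"
    using finite_nat_bounded[OF T] by blast
  show ?thesis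
    unfolding char_output_proc[OF assms(1,2) T N] by simp
qed

theorem corollary1:
  fixes A1 :: "real^'n1^'n1" and B1 :: "real^'m^'n1" and G1 :: "real^'l1^'n1" and C1 :: "real^'n1^'p"
    and A2 :: "real^'n2^'n2" and B2 :: "real^'m^'n2" and G2 :: "real^'l2^'n2" and C2 :: "real^'n2^'p"
    and mu1 :: "real^'l1" and mu2 :: "real^'l2" and Psi1 Psi2 :: "real^'p^'p"
    and M1 :: "'a measure" and w1 :: "nat \<Rightarrow> 'a \<Rightarrow> real^'l1" and nu1 :: "nat \<Rightarrow> 'a \<Rightarrow> real^'p"
    and M2 :: "'b measure" and w2 :: "nat \<Rightarrow> 'b \<Rightarrow> real^'l2" and nu2 :: "nat \<Rightarrow> 'b \<Rightarrow> real^'p"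
  assumes Psi_sym: "transpose Psi1 = Psi1" and Psi_psd: "\<forall>a. 0 \<le> a \<bullet> (Psi1 *v a)"
    and noise1: "noise_model M1 mu1 Psi1 w1 nu1"
    and noise2: "noise_model M2 mu2 Psi2 w2 nu2"
    and p0: "Psi1 = Psi2"
    and p1: "\<forall>t. C1 ** matpow A1 t ** B1 = C2 ** matpow A2 t ** B2"
    and p2: "\<forall>t. (C1 ** matpow A1 t ** G1) *v mu1 = (C2 ** matpow A2 t ** G2) *v mu2"
    and p3: "\<forall>h k. C1 ** matpow A1 k ** G1 ** transpose G1 ** transpose (matpow A1 h) ** transpose C1
                 = C2 ** matpow A2 k ** G2 ** transpose G2 ** transpose (matpow A2 h) ** transpose C2"
  defines "nt \<equiv> CARD('n1) + CARD('n2)"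
  defines "K \<equiv> {z :: (real^'n1) \<times> (real^'n2). Obs nt A1 C1 (fst z) = Obs nt A2 C2 (snd z)}"
  defines "EqBeh \<equiv> \<lambda>R :: ((real^'n1) \<times> (real^'n2)) set. \<forall>x1 x2 u. (x1, x2) \<in> R \<longrightarrow>
             stoch_equiv M1 (output_proc A1 B1 G1 C1 w1 nu1 x1 u) M2 (output_proc A2 B2 G2 C2 w2 nu2 x2 u)"
  shows "subspace K \<and> EqBeh K \<and> (\<forall>R. subspace R \<and> EqBeh R \<longrightarrow> R \<subseteq> K)"
proof -
  have K_eq: "K = {z. \<forall>t. (C1 ** matpow A1 t) *v fst z = (C2 ** matpow A2 t) *v snd z}"
    unfolding K_def nt_def Obs_eq_iff_outputs_eq ..
  have "stoch_equiv M1 (output_proc A1 B1 G1 C1 w1 nu1 x1 u) M2 (output_proc A2 B2 G2 C2 w2 nu2 x2 u) \<longleftrightarrow>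
      (\<forall>t. (C1 ** matpow A1 t) *v x1 - (C2 ** matpow A2 t) *v x2 = 0)" for x1 x2 u
  proof (rule stoch_equiv_iff_char_shift_eq_0)
    show "prob_space M1" "prob_space M2"
      using noise1 noise2 by (simp_all add: noise_model_def)
    show "output_proc A1 B1 G1 C1 w1 nu1 x1 u t \<in> borel_measurable M1"
      "output_proc A2 B2 G2 C2 w2 nu2 x2 u t \<in> borel_measurable M2" for t
      using noise1 noise2 by (simp_all add: output_proc_borel_measurable)
    show "finite T \<Longrightarrow> (CLINT \<omega>|M2. iexp (\<Sum>t\<in>T. a t \<bullet> output_proc A2 B2 G2 C2 w2 nu2 x2 u t \<omega>)) \<noteq> 0"
      for T a
      using noise2 Psi_psd p0 by (intro char_output_proc_nonzero) simp_all
  qed (rule char_output_proc_shift[OF noise1 noise2 Psi_psd p0 p1 p2 p3])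
  then have equiv_iff: "EqBeh R \<longleftrightarrow> R \<subseteq> K" for R
    unfolding EqBeh_def K_eq by auto
  have "subspace K"
    unfolding K_eq subspace_def by (auto simp: matrix_vector_right_distrib matrix_vector_mult_scaleR)
  then show ?thesis
    using equiv_iff by blast
qed

end
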